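(* Let $k\ge 0$ and $n,m>0$ be integers and let $P\in T_{n,k,m}$. Then $$\mathrm{word}(\phi'_{n,k,m}(P))=\mathrm{flip}\circ\mathrm{rev}\circ\mathrm{sw}^-_{1,-m}\circ\mathrm{rev}\circ\mathrm{flip}(\mathrm{word}(P)).$$
   Context: Words over $\{\mathrm{N},\mathrm{E}\}$ are identified with lattice paths from $(0,0)$ (N = unit north step, E = unit east step); $\mathrm{word}(P)$ is the word of a path $P$. $\mathrm{rev}(w_1\cdots w_n)=w_n\cdots w_1$, and $\mathrm{flip}$ interchanges the letters $\mathrm{N}$ and $\mathrm{E}$. For integers $r,s$, the levels of a word $w=w_1\cdots w_n$ are $l_0=0$, $l_i=l_{i-1}+r$ if $w_i=\mathrm{N}$, $l_i=l_{i-1}+s$ if $w_i=\mathrm{E}$ (so $l_i=ry+sx$ where $(x,y)$ is the endpoint of step $i$). The sweep map $\mathrm{sw}^-_{r,s}(w)$ is obtained by: for $k=-1,-2,-3,\ldots$ and then $k=\ldots,3,2,1,0$ (all negative values in decreasing order, then all nonnegative values in decreasing order), scan $w$ from right to left and append each letter $w_i$ ($i\ge1$) with $l_i=k$. $T_{n,k,m}$ is the set of lattice paths from $(0,0)$ to $(k+mn,n)$ with unit north and east steps that never go strictly to the right of the line $x=k+my$. For $P\in T_{n,k,m}$ its area vector is $g(P)=(g_0,\ldots,g_{n-1})$, where $g_i$ is the number of complete unit lattice squares in the strip $\{(x,y):x\ge0,\ i\le y\le i+1\}$ lying to the right of $P$ and to the left of the line $x=k+my$. For each integer $i\ge 0$,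 let $z^{(i)}$ be the subsequence of $g(P)$ consisting of the entries lying in $\{i,i-1,\ldots,i-m\}$, let $M$ be the largest $i$ with $z^{(i)}$ nonempty, and let $\sigma^{(i)}\in\{\mathrm{N},\mathrm{E}\}^*$ be obtained from $z^{(i)}$ by replacing each entry equal to $i$ by $\mathrm{N}$ and every other entry by $\mathrm{E}$. For $k<i\le M$, $\sigma^{(i)}$ begins with $\mathrm{E}$; write $\sigma^{(i)}=\mathrm{E}\tilde\sigma^{(i)}$. Set $\tau^{(i)}=\mathrm{rev}(\sigma^{(i)})$ for $0\le i\le k$, $\tau^{(i)}=\mathrm{E}\,\mathrm{rev}(\tilde\sigma^{(i)})$ for $k<i\le M$, and $\tau^{(i)}$ empty for $i>M$. Define $$\tau=\tau^{(0)}\,\mathrm{E}\tau^{(1)}\,\mathrm{E}\tau^{(2)}\cdots\mathrm{E}\tau^{(k)}\,\tau^{(k+1)}\cdots\tau^{(M)}$$ (exactly $k$ inserted letters $\mathrm{E}$, preceding $\tau^{(1)},\ldots,\tau^{(k)}$), and let $\phi'_{n,k,m}(P)$ be the lattice path with word $\tau$. *)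

theory Defs
  imports Main
begin

text \<open>Letters N (unit north step) and E (unit east step); a lattice path from (0,0)
  is identified with its word.\<close>
datatype step = N | E

definition flip :: "step list \<Rightarrow> step list" where
  "flip w = map (\<lambda>c. if c = N then E else N) w"

definition cntN :: "step list \<Rightarrow> nat" where
  "cntN w = length (filter (\<lambda>c. c = N) w)"

definition cntE :: "step list \<Rightarrow> nat" where
  "cntE w = length (filter (\<lambda>c. c = E) w)"

definition level :: "int \<Rightarrow> int \<Rightarrow> step list \<Rightarrow> nat \<Rightarrow> int" where
  "level r s w i = r * int (cntN (take i w)) + s * int (cntE (take i w))"

definition letters_at :: "int \<Rightarrow> int \<Rightarrow> step list \<Rightarrow> int \<Rightarrow> step list" where
  "letters_at r s w lv = rev [w ! j. j \<leftarrow> [0..<length w], level r s w (j + 1) = lv]"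

text \<open>Sweep map sw^-_{r,s}: levels -1,-2,-3,... and then ...,2,1,0.  All levels lie in
  [-B, B] with B = length w * (|r|+|s|); levels outside the actual range contribute nothing.\<close>
definition sweep_minus :: "int \<Rightarrow> int \<Rightarrow> step list \<Rightarrow> step list" where
  "sweep_minus r s w =
     (let B = int (length w) * (\<bar>r\<bar> + \<bar>s\<bar>) in
      concat (map (letters_at r s w) (rev [-B..-1] @ rev [0..B])))"

definition T :: "nat \<Rightarrow> nat \<Rightarrow> nat \<Rightarrow> step list set" where
  "T n k m = {w. cntN w = n \<and> cntE w = k + m * n \<and>
      (\<forall>i \<le> length w. cntE (take i w) \<le> k + m * cntN (take i w))}"

text \<open>Position (0-based) in w of the (i+1)-st north step.\<close>
definition posN :: "step list \<Rightarrow> nat \<Rightarrow> nat" where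
  "posN w i = [j \<leftarrow> [0..<length w]. w ! j = N] ! i"

text \<open>Area vector: g_i = (k + m i) - (x-coordinate of the (i+1)-st north step), the number of
  full unit squares in the strip i \<le> y \<le> i+1 between the path and the line x = k + m y.\<close>
definition area_vec :: "nat \<Rightarrow> nat \<Rightarrow> nat \<Rightarrow> step list \<Rightarrow> int list" where
  "area_vec n k m w = [int k + int m * int i - int (cntE (take (posN w i) w)). i \<leftarrow> [0..<n]]"

definition zseq :: "nat \<Rightarrow> int list \<Rightarrow> nat \<Rightarrow> int list" where
  "zseq m g i = filter (\<lambda>x. int i - int m \<le> x \<and> x \<le> int i) g"

definition sigma :: "nat \<Rightarrow> int list \<Rightarrow> nat \<Rightarrow> step list" where
  "sigma m g i = map (\<lambda>x. if x = int i then N else E) (zseq m g i)"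

definition Mtop :: "nat \<Rightarrow> int list \<Rightarrow> nat" where
  "Mtop m g = Max {i. zseq m g i \<noteq> []}"

text \<open>tau^(i); for k < i \<le> M, sigma^(i) = E sigma~^(i), i.e. sigma~^(i) = tl sigma^(i).\<close>
definition tau :: "nat \<Rightarrow> nat \<Rightarrow> int list \<Rightarrow> nat \<Rightarrow> step list" where
  "tau k m g i =
     (if i \<le> k then rev (sigma m g i)
      else if i \<le> Mtop m g then E # rev (tl (sigma m g i))
      else [])"

definition phi' :: "nat \<Rightarrow> nat \<Rightarrow> nat \<Rightarrow> step list \<Rightarrow> step list" where
  "phi' n k m w =
     (let g = area_vec n k m w in
        tau k m g 0
        @ concat (map (\<lambda>i. E # tau k m g i) [1..<k + 1])
        @ concat (map (\<lambda>i. tau k m g i) [k + 1..<Mtop m g + 1]))"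

end

theory Submission
  imports Defs
begin

text \<open>Record, before each step of P, its height k + m #N - #E, the horizontal distance from the
  current point to the line x = k + m y: it starts at k, rises by m at N, falls by 1 at E, ends
  at 0 and stays within [0, |P|]. For (r, s) = (1, -m) the levels of rev (flip P) are these heights
  read backwards, so the right-hand side lists, for i = 0, 1, 2, ..., the letters of P that leave
  height i, and the area vector lists the heights of the north steps of P. Among the letters
  leaving height i, each N is a north step from height i, and the E steps match in order the
  north steps from heights in [i - m, i) that jumped over i. So these letters, preceded by an E when
  k < i, spell \<sigma>^(i) followed by an E when 0 < i.\<close>

lemma concat_map_if_singleton:
  "concat (map (\<lambda>x. if P x then [f x] else []) xs) = map f (filter P xs)"
  by (induction xs) auto

lemma zip_conv_map_nth:
  "length ys = length xs \<Longrightarrow> zip xs ys = map (\<lambda>t. (xs ! t, ys ! t)) [0..<length xs]"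
  by (rule nth_equalityI) auto

lemma upt_split: "a \<le> b \<Longrightarrow> b \<le> c \<Longrightarrow> [a..<c] = [a..<b] @ [b..<c]"
  using upt_add_eq_append[of a b "c - b"] by simp

lemma concat_map_upt_trailing_Nil:
  assumes "b \<le> c" and "\<And>i. a \<le> i \<Longrightarrow> b \<le> i \<Longrightarrow> i < c \<Longrightarrow> f i = []"
  shows "concat (map f [a..<c]) = concat (map f [a..<b])"
proof (cases "a \<le> b")
  case True
  then show ?thesis
    using upt_split[OF True assms(1)] assms(2) by simp
qed (use assms(2) in simp)

lemma upto_0_conv_upt: "[0..int n] = map int [0..<Suc n]"
  by (induction n) (simp_all add: upto_rec2)

lemma step_neq_iff [simp]: "c \<noteq> N \<longleftrightarrow> c = E" "c \<noteq> E \<longleftrightarrow> c = N"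
  by (cases c; simp)+

lemma cnt_simps [simp]:
  "cntN [] = 0" "cntE [] = 0"
  "cntN (N # w) = Suc (cntN w)" "cntE (N # w) = cntE w"
  "cntN (E # w) = cntN w" "cntE (E # w) = Suc (cntE w)"
  "cntN (u @ v) = cntN u + cntN v" "cntE (u @ v) = cntE u + cntE v"
  by (simp_all add: cntN_def cntE_def)

lemma length_eq_cntN_plus_cntE: "length w = cntN w + cntE w"
proof (induction w)
  case (Cons c w)
  then show ?case by (cases c) auto
qed simp

definition flip_step :: "step \<Rightarrow> step" where
  "flip_step c = (if c = N then E else N)"

lemma flip_eq_map: "flip w = map flip_step w"
  by (simp add: flip_def flip_step_def)

lemma cnt_rev_flip: "cntN (rev (flip w)) = cntE w" "cntE (rev (flip w)) = cntN w"
  by (simp_all add: cntN_def cntE_def flip_def rev_filter[symmetric] filter_map o_def)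

lemma flip_rev_concat_map_flip_step:
  "flip (rev (concat (map (\<lambda>lv. map flip_step (f lv)) (rev xs)))) = concat (map (\<lambda>lv. rev (f lv)) xs)"
proof -
  have "flip_step (flip_step c) = c" for c by (cases c) (simp_all add: flip_step_def)
  then show ?thesis by (induction xs) (simp_all add: flip_eq_map rev_map o_def)
qed

fun heights :: "nat \<Rightarrow> int \<Rightarrow> step list \<Rightarrow> int list" where
  "heights m h [] = []"
| "heights m h (N # w) = h # heights m (h + int m) w"
| "heights m h (E # w) = h # heights m (h - 1) w"

fun final_height :: "nat \<Rightarrow> int \<Rightarrow> step list \<Rightarrow> int" where
  "final_height m h [] = h"
| "final_height m h (N # w) = final_height m (h + int m) w"
| "final_height m h (E # w) = final_height m (h - 1) w"

definition letters_at_height :: "nat \<Rightarrow> int \<Rightarrow> step list \<Rightarrow> int \<Rightarrow> step list" where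
  "letters_at_height m h w lv = map fst (filter (\<lambda>p. snd p = lv) (zip w (heights m h w)))"

definition north_heights :: "nat \<Rightarrow> int \<Rightarrow> step list \<Rightarrow> int list" where
  "north_heights m h w = map snd (filter (\<lambda>p. fst p = N) (zip w (heights m h w)))"

lemma letters_at_height_simps [simp]:
  "letters_at_height m h [] lv = []"
  "letters_at_height m h (N # w) lv = (if h = lv then [N] else []) @ letters_at_height m (h + int m) w lv"
  "letters_at_height m h (E # w) lv = (if h = lv then [E] else []) @ letters_at_height m (h - 1) w lv"
  by (simp_all add: letters_at_height_def)

lemma north_heights_simps [simp]:
  "north_heights m h [] = []"
  "north_heights m h (N # w) = h # north_heights m (h + int m) w"
  "north_heights m h (E # w) = north_heights m (h - 1) w"
  by (simp_all add: north_heights_def)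

lemma sigma_Nil [simp]: "sigma m [] i = []"
  by (simp add: sigma_def zseq_def)

lemma sigma_Cons [simp]:
  "sigma m (x # g) i =
     (if int i - int m \<le> x \<and> x \<le> int i then [if x = int i then N else E] else []) @ sigma m g i"
  by (simp add: sigma_def zseq_def)

lemma letters_at_height_eq_Nil:
  "lv \<notin> set (heights m h w) \<Longrightarrow> letters_at_height m h w lv = []"
  by (auto simp: letters_at_height_def filter_empty_conv dest: set_zip_rightD)

lemma set_north_heights_subset: "set (north_heights m h w) \<subseteq> set (heights m h w)"
  by (auto simp: north_heights_def dest: set_zip_rightD)

lemma letters_at_height_eq_sigma:
  "(if h < int i then E # letters_at_height m h w (int i) else letters_at_height m h w (int i))
   = (if final_height m h w < int i then sigma m (north_heights m h w) i @ [E]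
      else sigma m (north_heights m h w) i)"
  by (induction m h w rule: heights.induct) (auto split: if_splits)

lemma length_heights [simp]: "length (heights m h w) = length w"
  by (induction m h w rule: heights.induct) auto

lemma nth_heights:
  "t < length w \<Longrightarrow> heights m h w ! t = h + int m * int (cntN (take t w)) - int (cntE (take t w))"
  by (induction m h w arbitrary: t rule: heights.induct) (auto simp: nth_Cons' take_Cons' algebra_simps)

lemma final_height_eq: "final_height m h w = h + int m * int (cntN w) - int (cntE w)"
  by (induction m h w rule: heights.induct) (auto simp: algebra_simps)

lemma letters_at_conv_zip:
  "letters_at r s v lv =
     rev (map fst (filter (\<lambda>q. snd q = lv) (zip v (map (\<lambda>j. level r s v (j + 1)) [0..<length v]))))"
  by (simp add: letters_at_def concat_map_if_singleton zip_conv_map_nth filter_map o_def)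
    (rule arg_cong[where f = "map (nth v)"], rule filter_cong; simp)

lemma levels_rev_flip:
  "map (\<lambda>j. level 1 (- int m) (rev (flip w)) (j + 1)) [0..<length w]
   = rev (map (\<lambda>x. x - final_height m h w) (heights m h w))"
proof (rule nth_equalityI)
  fix j assume "j < length (map (\<lambda>j. level 1 (- int m) (rev (flip w)) (j + 1)) [0..<length w])"
  then have j: "j < length w" by simp
  define t where "t = length w - Suc j"
  have t: "t < length w" using j by (simp add: t_def)
  have "take (j + 1) (rev (flip w)) = rev (flip (drop t w))"
    by (simp add: t_def take_rev flip_def drop_map)
  moreover have "cntN w = cntN (take t w) + cntN (drop t w)" "cntE w = cntE (take t w) + cntE (drop t w)"
    using cnt_simps(7,8)[of "take t w" "drop t w"] by simp_all
  ultimately show "map (\<lambda>j. level 1 (- int m) (rev (flip w)) (j + 1)) [0..<length w] ! j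
      = rev (map (\<lambda>x. x - final_height m h w) (heights m h w)) ! j"
    using j t by (simp add: rev_nth t_def[symmetric] level_def cnt_rev_flip nth_heights final_height_eq
        algebra_simps)
qed simp

lemma letters_at_rev_flip:
  "letters_at 1 (- int m) (rev (flip w)) (lv - final_height m h w) = map flip_step (letters_at_height m h w lv)"
  using levels_rev_flip[of m w h]
  by (simp add: letters_at_conv_zip zip_rev letters_at_height_def rev_filter rev_map filter_map o_def
      flip_eq_map zip_map_map case_prod_unfold)

definition north_positions :: "step list \<Rightarrow> nat list" where
  "north_positions w = filter (\<lambda>j. w ! j = N) [0..<length w]"

lemma north_positions_snoc:
  "north_positions (w @ [c]) = north_positions w @ (if c = N then [length w] else [])"
proof -
  have "filter (\<lambda>j. (w @ [c]) ! j = N) [0..<length w] = filter (\<lambda>j. w ! j = N) [0..<length w]"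
    by (rule filter_cong) (auto simp: nth_append)
  then show ?thesis by (simp add: north_positions_def)
qed

lemma length_north_positions [simp]: "length (north_positions w) = cntN w"
proof (induction w rule: rev_induct)
  case (snoc c w)
  then show ?case by (cases c) (simp_all add: north_positions_snoc)
qed (simp add: north_positions_def)

lemma nth_north_positions:
  "i < cntN w \<Longrightarrow> north_positions w ! i < length w \<and> cntN (take (north_positions w ! i) w) = i"
proof (induction w rule: rev_induct)
  case (snoc c w)
  show ?case
  proof (cases "i < cntN w")
    case True
    then show ?thesis using snoc by (simp add: north_positions_snoc nth_append)
  next
    case False
    then have "c = N" "i = cntN w" using snoc.prems by (cases c; simp)+
    then show ?thesis by (simp add: north_positions_snoc nth_append)
  qed
qed simp

lemma north_heights_conv_nth:
  "north_heights m h w = map (nth (heights m h w)) (north_positions w)"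
  by (simp add: north_heights_def north_positions_def zip_conv_map_nth filter_map o_def)

lemma area_vec_eq_north_heights:
  assumes "cntN w = n"
  shows "area_vec n k m w = north_heights m (int k) w"
proof -
  have "area_vec n k m w = map (\<lambda>i. heights m (int k) w ! (north_positions w ! i)) [0..<n]"
    unfolding area_vec_def
  proof (rule map_cong)
    fix i assume "i \<in> set [0..<n]"
    then show "int k + int m * int i - int (cntE (take (posN w i) w))
        = heights m (int k) w ! (north_positions w ! i)"
      using nth_north_positions[of i w] assms
      by (simp add: nth_heights posN_def north_positions_def[symmetric])
  qed simp
  also have "\<dots> = map (nth (heights m (int k) w))
      (map (nth (north_positions w)) [0..<length (north_positions w)])"
    using assms by simp
  also have "\<dots> = map (nth (heights m (int k) w)) (north_positions w)"
    by (simp only: map_nth)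
  finally show ?thesis by (simp add: north_heights_conv_nth)
qed

lemma final_height_T: "w \<in> T n k m \<Longrightarrow> final_height m (int k) w = 0"
  by (simp add: T_def final_height_eq)

lemma heights_T_bounds:
  assumes "w \<in> T n k m" and "x \<in> set (heights m (int k) w)"
  shows "0 \<le> x \<and> x \<le> int (length w)"
proof -
  obtain t where t: "t < length w" and x: "x = int k + int m * int (cntN (take t w)) - int (cntE (take t w))"
    using assms(2) by (auto simp: in_set_conv_nth nth_heights)
  have "cntE (take t w) \<le> k + m * cntN (take t w)"
    using assms(1) t by (simp add: T_def)
  then have lower: "int (cntE (take t w)) \<le> int k + int m * int (cntN (take t w))"
    by (metis of_nat_add of_nat_le_iff of_nat_mult)
  have "cntN (take t w) \<le> cntN w"
    using cnt_simps(7)[of "take t w" "drop t w"] by simp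
  then have "int m * int (cntN (take t w)) \<le> int m * int n"
    using assms(1) by (simp add: T_def mult_left_mono)
  moreover have "k + m * n \<le> length w"
    using assms(1) length_eq_cntN_plus_cntE[of w] by (simp add: T_def)
  then have "int k + int m * int n \<le> int (length w)"
    by (metis of_nat_add of_nat_le_iff of_nat_mult)
  ultimately show ?thesis using x lower by linarith
qed

lemma area_vec_T_bounds:
  assumes "w \<in> T n k m" and "x \<in> set (area_vec n k m w)"
  shows "0 \<le> x \<and> x \<le> int (length w)"
proof (rule heights_T_bounds[OF assms(1)])
  have "cntN w = n" using assms(1) by (simp add: T_def)
  then show "x \<in> set (heights m (int k) w)"
    using assms(2) area_vec_eq_north_heights[of w n k m] set_north_heights_subset by auto
qed

lemma sweep_T_conv_letters_at_height:
  assumes "w \<in> T n k m"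
  shows "flip (rev (sweep_minus 1 (- int m) (rev (flip w))))
    = concat (map (\<lambda>i. rev (letters_at_height m (int k) w (int i))) [0..<length w * (1 + m) + 1])"
proof -
  have letters:
    "letters_at 1 (- int m) (rev (flip w)) lv = map flip_step (letters_at_height m (int k) w lv)" for lv
    using letters_at_rev_flip[where m = m and w = w and h = "int k" and lv = lv] final_height_T[OF assms]
    by simp
  have negative: "letters_at_height m (int k) w lv = []" if "lv < 0" for lv
    by (rule letters_at_height_eq_Nil) (use that heights_T_bounds[OF assms] in force)
  have "int (length (rev (flip w))) * (\<bar>1\<bar> + \<bar>- int m\<bar>) = int (length w * (1 + m))"
    by (simp add: flip_def algebra_simps)
  then have "sweep_minus 1 (- int m) (rev (flip w))
      = concat (map (\<lambda>lv. map flip_step (letters_at_height m (int k) w lv)) (rev [0..int (length w * (1 + m))]))"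
    unfolding sweep_minus_def Let_def letters using negative by simp
  then show ?thesis
    by (simp only: flip_rev_concat_map_flip_step upto_0_conv_upt) (simp add: o_def)
qed

lemma finite_zseq_support: "finite {i. zseq m g i \<noteq> []}"
proof (rule finite_subset)
  show "{i. zseq m g i \<noteq> []} \<subseteq> (\<Union>x\<in>set g. {..nat x + m})"
    by (force simp: zseq_def filter_empty_conv)
qed simp

lemma le_Mtop: "zseq m g i \<noteq> [] \<Longrightarrow> i \<le> Mtop m g"
  unfolding Mtop_def by (rule Max_ge[OF finite_zseq_support]) simp

lemma zseq_Mtop_nonempty:
  assumes "x \<in> set g" and "0 \<le> x"
  shows "zseq m g (Mtop m g) \<noteq> []"
proof -
  have "zseq m g (nat x) \<noteq> []"
    using assms by (force simp: zseq_def filter_empty_conv)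
  then show ?thesis
    unfolding Mtop_def using Max_in[OF finite_zseq_support] by auto
qed

lemma north_heights_below_window:
  "h < int i \<Longrightarrow> zseq m (north_heights m h w) i = [] \<Longrightarrow> x \<in> set (north_heights m h w)
   \<Longrightarrow> x < int i - int m"
  by (induction m h w rule: heights.induct) (auto simp: zseq_def split: if_splits)

lemma zseq_area_vec_Mtop_T:
  assumes "w \<in> T n k m" and "0 < n"
  shows "zseq m (area_vec n k m w) (Mtop m (area_vec n k m w)) \<noteq> []"
proof -
  have "area_vec n k m w \<noteq> []"
    using assms(2) by (simp add: area_vec_def)
  then have "hd (area_vec n k m w) \<in> set (area_vec n k m w)"
    by (rule hd_in_set)
  then show ?thesis
    using zseq_Mtop_nonempty area_vec_T_bounds[OF assms(1)] by blast
qed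

lemma Mtop_area_vec_T_le:
  assumes "w \<in> T n k m" and "0 < n"
  shows "Mtop m (area_vec n k m w) \<le> length w * (1 + m)"
proof -
  obtain x where "x \<in> set (area_vec n k m w)" "int (Mtop m (area_vec n k m w)) - int m \<le> x"
    using zseq_area_vec_Mtop_T[OF assms] by (auto simp: zseq_def filter_empty_conv)
  then have "Mtop m (area_vec n k m w) \<le> length w + m"
    using area_vec_T_bounds[OF assms(1)] by force
  moreover have "1 \<le> length w"
    using assms length_eq_cntN_plus_cntE[of w] by (simp add: T_def)
  then have "1 * m \<le> length w * m"
    by (rule mult_le_mono1)
  ultimately show ?thesis
    unfolding distrib_left by linarith
qed

lemma sigma_area_vec_T_nonempty:
  assumes "w \<in> T n k m" and "0 < n" and "k < i" and "i \<le> Mtop m (area_vec n k m w)"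
  shows "sigma m (area_vec n k m w) i \<noteq> []"
proof
  let ?g = "area_vec n k m w"
  have g: "?g = north_heights m (int k) w"
    using assms(1) area_vec_eq_north_heights by (simp add: T_def)
  assume "sigma m ?g i = []"
  then have empty: "zseq m (north_heights m (int k) w) i = []"
    by (simp add: sigma_def g)
  have below: "x < int i - int m" if "x \<in> set ?g" for x
    using north_heights_below_window[of "int k" i m w x] empty that assms(3) g by simp
  obtain x where "x \<in> set ?g" "int (Mtop m ?g) - int m \<le> x"
    using zseq_area_vec_Mtop_T[OF assms(1,2)] by (auto simp: zseq_def filter_empty_conv)
  then show False
    using below assms(4) by force
qed

lemma rev_letters_at_height_T_eq_tau:
  assumes "w \<in> T n k m" and "0 < n"
  shows "rev (letters_at_height m (int k) w (int i)) =
    (if 0 < i \<and> i \<le> k then E # tau k m (area_vec n k m w) i else tau k m (area_vec n k m w) i)"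
proof -
  let ?g = "area_vec n k m w" and ?F = "letters_at_height m (int k) w (int i)"
  have "?g = north_heights m (int k) w"
    using assms(1) area_vec_eq_north_heights by (simp add: T_def)
  then have level: "(if k < i then E # ?F else ?F) = (if 0 < i then sigma m ?g i @ [E] else sigma m ?g i)"
    using letters_at_height_eq_sigma[of "int k" i m w] final_height_T[OF assms(1)] by simp
  consider "i = 0" | "0 < i" "i \<le> k" | "k < i" "i \<le> Mtop m ?g" | "k < i" "Mtop m ?g < i"
    by linarith
  then show ?thesis
  proof cases
    case 3
    then obtain c rest where "sigma m ?g i = c # rest"
      using sigma_area_vec_T_nonempty[OF assms] by (meson neq_Nil_conv)
    then show ?thesis using level 3 by (simp add: tau_def)
  next
    case 4
    then have "sigma m ?g i = []"
      using le_Mtop by (force simp: sigma_def)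
    then show ?thesis using level 4 by (simp add: tau_def)
  qed (use level in \<open>simp_all add: tau_def\<close>)
qed

theorem mainTheorem2:
  fixes n k m :: nat and P :: "step list"
  assumes "n > 0" and "m > 0" and "P \<in> T n k m"
  shows "phi' n k m P = flip (rev (sweep_minus 1 (- int m) (rev (flip P))))"
proof -
  define g where "g = area_vec n k m P"
  define B where "B = length P * (1 + m)"
  let ?F = "\<lambda>i. rev (letters_at_height m (int k) P (int i))"
  have "k \<le> B"
    using assms(3) length_eq_cntN_plus_cntE[of P] by (simp add: T_def B_def)
  have "Mtop m g \<le> B"
    using Mtop_area_vec_T_le[OF assms(3,1)] by (simp add: g_def B_def)
  have levels: "[0..<B + 1] = 0 # [1..<k + 1] @ [k + 1..<B + 1]"
    using upt_split[of 1 "k + 1" "B + 1"] \<open>k \<le> B\<close> by (simp add: upt_conv_Cons del: upt_Suc)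
  have low: "map ?F [1..<k + 1] = map (\<lambda>i. E # tau k m g i) [1..<k + 1]"
   and high: "map ?F [k + 1..<B + 1] = map (tau k m g) [k + 1..<B + 1]"
    by (rule map_cong; auto simp: rev_letters_at_height_T_eq_tau[OF assms(3,1)] g_def)+
  have trailing: "concat (map (tau k m g) [k + 1..<B + 1]) = concat (map (tau k m g) [k + 1..<Mtop m g + 1])"
    using \<open>Mtop m g \<le> B\<close> by (intro concat_map_upt_trailing_Nil) (auto simp: tau_def)
  show ?thesis
    unfolding sweep_T_conv_letters_at_height[OF assms(3)] B_def[symmetric] levels list.map map_append low high
      concat.simps concat_append trailing
    unfolding phi'_def Let_def rev_letters_at_height_T_eq_tau[OF assms(3,1)] g_def[symmetric]
    by simp
qed

end
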